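(* Let $\dot{\bm{A}},\dot{\bm{B}}\in\mathbb{Q}^{m\times n}$ with $m\ge n$, and let $\sigma_{\dot{\bm{A}},1}\ge\dots\ge\sigma_{\dot{\bm{A}},n}\ge0$ and $\sigma_{\dot{\bm{B}},1}\ge\dots\ge\sigma_{\dot{\bm{B}},n}\ge0$ be the singular values of $\dot{\bm{A}}$ and $\dot{\bm{B}}$ in descending order. Then $$\mathrm{Re}\big(\mathrm{Tr}(\dot{\bm{A}}^{*}\dot{\bm{B}})\big)\le \sum_{i=1}^n \sigma_{\dot{\bm{A}},i}\,\sigma_{\dot{\bm{B}},i}.$$ Equality holds if and only if there exist unitary $\dot{\bm{U}}\in\mathbb{Q}^{m\times m}$ and $\dot{\bm{V}}\in\mathbb{Q}^{n\times n}$ that simultaneously singular value decompose $\dot{\bm{A}}$ and $\dot{\bm{B}}$, i.e. $\dot{\bm{A}}=\dot{\bm{U}}\bm{\Sigma}_{\dot{\bm{A}}}\dot{\bm{V}}^*$ and $\dot{\bm{B}}=\dot{\bm{U}}\bm{\Sigma}_{\dot{\bm{B}}}\dot{\bm{V}}^*$, where $\bm{\Sigma}_{\dot{\bm{A}}}$, $\bm{\Sigma}_{\dot{\bm{B}}}$ are the $m\times n$ real matrices with diagonals $(\sigma_{\dot{\bm{A}},1},\dots,\sigma_{\dot{\bm{A}},n})$ and $(\sigma_{\dot{\bm{B}},1},\dots,\sigma_{\dot{\bm{B}},n})$ and zeros elsewhere.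
   Context: $\mathbb{Q}$ denotes the real quaternion algebra with basis $1,\bm{i},\bm{j},\bm{k}$ ($\bm{i}^2=\bm{j}^2=\bm{k}^2=\bm{ijk}=-1$). For a quaternion $a_0+a_1\bm{i}+a_2\bm{j}+a_3\bm{k}$, its real part is $a_0$; $\mathrm{Re}$ of a quaternion matrix trace is the real part of the trace (sum of diagonal entries). ${}^*$ denotes conjugate transpose; a square quaternion matrix $\dot{\bm{U}}$ is unitary if $\dot{\bm{U}}^*\dot{\bm{U}}=\dot{\bm{U}}\dot{\bm{U}}^*=I$. Singular values of a quaternion matrix are those given by its quaternion SVD $\dot{\bm{X}}=\dot{\bm{U}}\bm{\Sigma}\dot{\bm{V}}^*$ with $\dot{\bm{U}},\dot{\bm{V}}$ unitary and $\bm{\Sigma}$ real nonnegative diagonal. *)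

theory Defs
  imports "Jordan_Normal_Form.Matrix"
begin

text \<open>Real quaternions a0 + a1 i + a2 j + a3 k, with i^2 = j^2 = k^2 = ijk = -1.\<close>

datatype quat = Quat (qre: real) (qim_i: real) (qim_j: real) (qim_k: real)

instantiation quat :: ring_1
begin

definition "0 = Quat 0 0 0 0"
definition "1 = Quat 1 0 0 0"
definition "p + q = Quat (qre p + qre q) (qim_i p + qim_i q) (qim_j p + qim_j q) (qim_k p + qim_k q)"
definition "p - q = Quat (qre p - qre q) (qim_i p - qim_i q) (qim_j p - qim_j q) (qim_k p - qim_k q)"
definition "- p = Quat (- qre p) (- qim_i p) (- qim_j p) (- qim_k p)"
definition "p * q = Quat
   (qre p * qre q - qim_i p * qim_i q - qim_j p * qim_j q - qim_k p * qim_k q)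
   (qre p * qim_i q + qim_i p * qre q + qim_j p * qim_k q - qim_k p * qim_j q)
   (qre p * qim_j q - qim_i p * qim_k q + qim_j p * qre q + qim_k p * qim_i q)
   (qre p * qim_k q + qim_i p * qim_j q - qim_j p * qim_i q + qim_k p * qre q)"

instance
  by standard (simp_all add: zero_quat_def one_quat_def plus_quat_def minus_quat_def
      uminus_quat_def times_quat_def algebra_simps quat.expand)

end

definition qcnj :: "quat \<Rightarrow> quat" where
  "qcnj p = Quat (qre p) (- qim_i p) (- qim_j p) (- qim_k p)"

definition qreal :: "real \<Rightarrow> quat" where
  "qreal x = Quat x 0 0 0"

definition qadj :: "quat mat \<Rightarrow> quat mat" where
  "qadj M = transpose_mat (map_mat qcnj M)"

definition qtrace :: "quat mat \<Rightarrow> quat" where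
  "qtrace M = (\<Sum>i<dim_row M. M $$ (i, i))"

definition qunitary :: "nat \<Rightarrow> quat mat \<Rightarrow> bool" where
  "qunitary k U \<longleftrightarrow> U \<in> carrier_mat k k \<and> qadj U * U = 1\<^sub>m k \<and> U * qadj U = 1\<^sub>m k"

definition diag_rect :: "nat \<Rightarrow> nat \<Rightarrow> (nat \<Rightarrow> real) \<Rightarrow> quat mat" where
  "diag_rect m n s = mat m n (\<lambda>(i, j). if i = j then qreal (s i) else 0)"

definition singular_values :: "nat \<Rightarrow> nat \<Rightarrow> quat mat \<Rightarrow> (nat \<Rightarrow> real) \<Rightarrow> bool" where
  "singular_values m n A s \<longleftrightarrow>
     A \<in> carrier_mat m n \<and>
     (\<forall>i j. i \<le> j \<longrightarrow> j < n \<longrightarrow> s j \<le> s i) \<and> (\<forall>i<n. 0 \<le> s i) \<and>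
     (\<exists>U V. qunitary m U \<and> qunitary n V \<and> A = U * diag_rect m n s * qadj V)"

end

theory Submission
  imports Defs
begin

text \<open>
  Write A = U1 S_a V1^* and B = U2 S_b V2^*, and let W = U1^* U2 and Z = V1^* V2. Then
  Re tr(A^* B) = sum_i a_i x_i with the couplings x_i = sum_j b_j Re(W_ij conj(Z_ij)).
  As Re(w conj(z)) <= (|w|^2 + |z|^2) / 2 and these averaged squared moduli form a doubly
  substochastic array, every partial sum x_0 + ... + x_k is at most b_0 + ... + b_k, and Abel
  summation against the descending a gives the inequality.

  In the equality case the singular vectors are aligned one column at a time. Suppose the first r
  columns of U1, U2 and of V1, V2 agree, a and b are positive and constant on [r, k], and a drops
  after k (otherwise b does, and A and B change roles). Equality in the Abel summation forces
  x_r = b_r, hence row r of W equals row r of Z, vanishes beyond column n, and is supported where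
  b equals b_r. A quaternionic Householder reflection, corrected by a unit diagonal, then gives
  unitaries P and R with P S_b = S_b R that carry the r-th columns of U2 and V2 to those of U1 and
  V1 and fix the earlier ones, so B = (U2 P) S_b (V2 R)^* is a decomposition sharing r + 1 columns
  with that of A. Columns belonging to zero singular values need no alignment.
\<close>

section \<open>Quaternion arithmetic\<close>

definition qnorm2 :: "quat \<Rightarrow> real" where
  "qnorm2 p = (qre p)\<^sup>2 + (qim_i p)\<^sup>2 + (qim_j p)\<^sup>2 + (qim_k p)\<^sup>2"

lemma quat_components [simp]:
  "qre 0 = 0" "qim_i 0 = 0" "qim_j 0 = 0" "qim_k 0 = 0"
  "qre 1 = 1" "qim_i 1 = 0" "qim_j 1 = 0" "qim_k 1 = 0"
  "qre (p + q) = qre p + qre q" "qim_i (p + q) = qim_i p + qim_i q"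
  "qim_j (p + q) = qim_j p + qim_j q" "qim_k (p + q) = qim_k p + qim_k q"
  "qre (p - q) = qre p - qre q" "qim_i (p - q) = qim_i p - qim_i q"
  "qim_j (p - q) = qim_j p - qim_j q" "qim_k (p - q) = qim_k p - qim_k q"
  "qre (- p) = - qre p" "qim_i (- p) = - qim_i p" "qim_j (- p) = - qim_j p" "qim_k (- p) = - qim_k p"
  "qre (qcnj p) = qre p" "qim_i (qcnj p) = - qim_i p" "qim_j (qcnj p) = - qim_j p"
  "qim_k (qcnj p) = - qim_k p"
  "qre (qreal x) = x" "qim_i (qreal x) = 0" "qim_j (qreal x) = 0" "qim_k (qreal x) = 0"
  by (simp_all add: zero_quat_def one_quat_def plus_quat_def minus_quat_def uminus_quat_def
      qcnj_def qreal_def)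

lemma quat_mult_components:
  "qre (p * q) = qre p * qre q - qim_i p * qim_i q - qim_j p * qim_j q - qim_k p * qim_k q"
  "qim_i (p * q) = qre p * qim_i q + qim_i p * qre q + qim_j p * qim_k q - qim_k p * qim_j q"
  "qim_j (p * q) = qre p * qim_j q - qim_i p * qim_k q + qim_j p * qre q + qim_k p * qim_i q"
  "qim_k (p * q) = qre p * qim_k q + qim_i p * qim_j q - qim_j p * qim_i q + qim_k p * qre q"
  by (simp_all add: times_quat_def)

lemma quat_eqI:
  "qre p = qre q \<Longrightarrow> qim_i p = qim_i q \<Longrightarrow> qim_j p = qim_j q \<Longrightarrow> qim_k p = qim_k q \<Longrightarrow> p = q"
  by (simp add: quat.expand)

lemma qcnj_mult: "qcnj (p * q) = qcnj q * qcnj p"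
  by (rule quat_eqI) (simp_all add: quat_mult_components algebra_simps)

lemma qcnj_add: "qcnj (p + q) = qcnj p + qcnj q"
  by (rule quat_eqI) simp_all

lemma qcnj_diff: "qcnj (p - q) = qcnj p - qcnj q"
  by (rule quat_eqI) simp_all

lemma qcnj_0 [simp]: "qcnj 0 = 0"
  by (rule quat_eqI) simp_all

lemma qcnj_1 [simp]: "qcnj 1 = 1"
  by (rule quat_eqI) simp_all

lemma qcnj_qcnj [simp]: "qcnj (qcnj p) = p"
  by (rule quat_eqI) simp_all

lemma qcnj_qreal [simp]: "qcnj (qreal x) = qreal x"
  by (rule quat_eqI) simp_all

lemma qcnj_eq_0_iff [simp]: "qcnj p = 0 \<longleftrightarrow> p = 0"
  by (metis qcnj_0 qcnj_qcnj)

lemma qcnj_sum: "qcnj (sum f A) = (\<Sum>x\<in>A. qcnj (f x))"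
  by (induction A rule: infinite_finite_induct) (simp_all add: qcnj_add)

lemma qreal_commute: "qreal x * p = p * qreal x"
  by (rule quat_eqI) (simp_all add: quat_mult_components)

lemma qreal_mult: "qreal x * qreal y = qreal (x * y)"
  by (rule quat_eqI) (simp_all add: quat_mult_components)

lemma qreal_add: "qreal x + qreal y = qreal (x + y)"
  by (rule quat_eqI) simp_all

lemma qreal_diff: "qreal x - qreal y = qreal (x - y)"
  by (rule quat_eqI) simp_all

lemma qreal_0 [simp]: "qreal 0 = 0"
  by (rule quat_eqI) simp_all

lemma qreal_1 [simp]: "qreal 1 = 1"
  by (rule quat_eqI) simp_all

lemma qreal_2: "qreal 2 = 2"
  by (metis one_add_one qreal_1 qreal_add)

lemma qreal_sum: "qreal (sum f A) = (\<Sum>x\<in>A. qreal (f x))"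
  by (induction A rule: infinite_finite_induct) (simp_all add: qreal_add[symmetric])

lemma qre_sum: "qre (sum f A) = (\<Sum>x\<in>A. qre (f x))"
  by (induction A rule: infinite_finite_induct) simp_all

lemma qre_qreal_mult [simp]: "qre (qreal x * p) = x * qre p"
  by (simp add: quat_mult_components)

lemma qre_mult_commute: "qre (p * q) = qre (q * p)"
  by (simp add: quat_mult_components algebra_simps)

lemma qre_mult_qreal_mult: "qre (p * qreal x * q) = x * qre (p * q)"
proof -
  have "p * qreal x * q = qreal x * (p * q)"
    by (metis mult.assoc qreal_commute)
  then show ?thesis
    by simp
qed

lemma qcnj_mult_self: "qcnj p * p = qreal (qnorm2 p)"
  by (rule quat_eqI) (simp_all add: qnorm2_def quat_mult_components power2_eq_square algebra_simps)

lemma mult_qcnj_self: "p * qcnj p = qreal (qnorm2 p)"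
  by (rule quat_eqI) (simp_all add: qnorm2_def quat_mult_components power2_eq_square algebra_simps)

lemma qnorm2_nonneg [simp]: "0 \<le> qnorm2 p"
  by (simp add: qnorm2_def)

lemma qnorm2_eq_0_iff [simp]: "qnorm2 p = 0 \<longleftrightarrow> p = 0"
proof
  assume "qnorm2 p = 0"
  then have "qre p = 0 \<and> qim_i p = 0 \<and> qim_j p = 0 \<and> qim_k p = 0"
    unfolding qnorm2_def by (simp add: add_nonneg_eq_0_iff)
  then show "p = 0"
    by (intro quat_eqI) simp_all
qed (simp add: qnorm2_def)

lemma qnorm2_0 [simp]: "qnorm2 0 = 0" and qnorm2_1 [simp]: "qnorm2 1 = 1"
  by (simp_all add: qnorm2_def)

lemma qnorm2_mult: "qnorm2 (p * q) = qnorm2 p * qnorm2 q"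
  by (simp add: qnorm2_def quat_mult_components power2_eq_square algebra_simps)

lemma qnorm2_qcnj [simp]: "qnorm2 (qcnj p) = qnorm2 p"
  by (simp add: qnorm2_def)

lemma qnorm2_uminus [simp]: "qnorm2 (- p) = qnorm2 p"
  by (simp add: qnorm2_def)

lemma qnorm2_qreal [simp]: "qnorm2 (qreal x) = x\<^sup>2"
  by (simp add: qnorm2_def)

lemma qre_mult_qcnj: "qre (p * qcnj q) = (qnorm2 p + qnorm2 q - qnorm2 (p - q)) / 2"
  by (simp add: qnorm2_def quat_mult_components power2_eq_square algebra_simps)

lemma qre_mult_qcnj_le: "qre (p * qcnj q) \<le> (qnorm2 p + qnorm2 q) / 2"
  using qnorm2_nonneg[of "p - q"] by (simp add: qre_mult_qcnj)

definition qphase :: "quat \<Rightarrow> quat" where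
  "qphase q = (if q = 0 then 1 else qreal (1 / sqrt (qnorm2 q)) * qcnj q)"

lemma mult_qphase: "q * qphase q = qreal (sqrt (qnorm2 q))"
proof (cases "q = 0")
  case False
  then have "0 < qnorm2 q"
    using qnorm2_nonneg[of q] qnorm2_eq_0_iff[of q] by linarith
  have "q * qphase q = qreal (1 / sqrt (qnorm2 q)) * (q * qcnj q)"
    using False by (simp add: qphase_def qreal_commute mult.assoc)
  also have "\<dots> = qreal (qnorm2 q / sqrt (qnorm2 q))"
    by (simp add: mult_qcnj_self qreal_mult)
  finally show ?thesis
    using \<open>0 < qnorm2 q\<close> by (simp add: real_div_sqrt)
qed (simp add: qphase_def)

lemma qnorm2_qphase: "qnorm2 (qphase q) = 1"
  by (simp add: qphase_def qnorm2_mult power_divide)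

lemma qphase_mult_qcnj: "qphase q * qcnj (qphase q) = 1"
  by (simp add: mult_qcnj_self qnorm2_qphase)

section \<open>Quaternion matrices and singular value decompositions\<close>

declare index_mult_mat(1) [simp del]

lemma sum_delta_mult:
  fixes f :: "nat \<Rightarrow> 'a :: semiring_1"
  assumes "i < N"
  shows "(\<Sum>t<N. (if i = t then 1 else 0) * f t) = f i"
    and "(\<Sum>t<N. f t * (if t = i then 1 else 0)) = f i"
proof -
  have "(\<Sum>t<N. (if i = t then 1 else 0) * f t) = (\<Sum>t<N. if t = i then f t else 0)"
    by (rule sum.cong) auto
  also have "\<dots> = f i"
    using assms by simp
  finally show "(\<Sum>t<N. (if i = t then 1 else 0) * f t) = f i" .
  have "(\<Sum>t<N. f t * (if t = i then 1 else 0)) = (\<Sum>t<N. if t = i then f t else 0)"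
    by (rule sum.cong) auto
  also have "\<dots> = f i"
    using assms by simp
  finally show "(\<Sum>t<N. f t * (if t = i then 1 else 0)) = f i" .
qed

lemma index_mult_mat_sum:
  assumes "A \<in> carrier_mat k l" "B \<in> carrier_mat l p" "i < k" "j < p"
  shows "(A * B) $$ (i, j) = (\<Sum>t<l. A $$ (i, t) * B $$ (t, j))"
  using assms by (auto simp: index_mult_mat(1) scalar_prod_def atLeast0LessThan intro!: sum.cong)

lemma index_mult_mat_col_cong:
  "i < dim_row A \<Longrightarrow> j < dim_col B \<Longrightarrow> j < dim_col B' \<Longrightarrow> col B j = col B' j \<Longrightarrow>
    (A * B) $$ (i, j) = (A * B') $$ (i, j)"
  by (simp add: index_mult_mat(1))

lemma qadj_dims [simp]: "dim_row (qadj A) = dim_col A" "dim_col (qadj A) = dim_row A"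
  by (simp_all add: qadj_def)

lemma qadj_carrier [simp]: "A \<in> carrier_mat k l \<Longrightarrow> qadj A \<in> carrier_mat l k"
  unfolding carrier_mat_def by simp

lemma qadj_index [simp]: "i < dim_col A \<Longrightarrow> j < dim_row A \<Longrightarrow> qadj A $$ (i, j) = qcnj (A $$ (j, i))"
  by (simp add: qadj_def)

lemma qadj_qadj [simp]: "qadj (qadj A) = A"
  by (rule eq_matI) auto

lemma qadj_mult_carrier:
  assumes A: "A \<in> carrier_mat k l" and B: "B \<in> carrier_mat l p"
  shows "qadj (A * B) = qadj B * qadj A"
proof (rule eq_matI)
  fix i j assume "i < dim_row (qadj B * qadj A)" "j < dim_col (qadj B * qadj A)"
  then have i: "i < p" and j: "j < k"
    using A B by (simp_all add: index_mult_mat(2,3))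
  have "qadj (A * B) $$ (i, j) = (\<Sum>t<l. qcnj (B $$ (t, i)) * qcnj (A $$ (j, t)))"
    using A B i j by (simp add: index_mult_mat(2,3) index_mult_mat_sum[OF A B] qcnj_sum qcnj_mult)
  also have "\<dots> = (qadj B * qadj A) $$ (i, j)"
    using A B i j by (simp add: index_mult_mat_sum[of _ p l _ k])
  finally show "qadj (A * B) $$ (i, j) = (qadj B * qadj A) $$ (i, j)" .
qed (use A B in \<open>simp_all add: index_mult_mat(2,3)\<close>)

lemma qadj_mult: "dim_col A = dim_row B \<Longrightarrow> qadj (A * B) = qadj B * qadj A"
  by (metis qadj_mult_carrier carrier_mat_triv)

lemma assoc_mult_mat_dims: "dim_col A = dim_row B \<Longrightarrow> dim_col B = dim_row C \<Longrightarrow> A * B * C = A * (B * C)"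
  by (metis assoc_mult_mat carrier_mat_triv)

lemma qunitary_carrier: "qunitary k U \<Longrightarrow> U \<in> carrier_mat k k"
  by (simp add: qunitary_def)

lemma qunitary_qadj: "qunitary k U \<Longrightarrow> qunitary k (qadj U)"
  by (auto simp: qunitary_def)

lemma qunitary_cancel_left:
  assumes "qunitary k U" "X \<in> carrier_mat k l"
  shows "qadj U * (U * X) = X" and "U * (qadj U * X) = X"
  using assms assoc_mult_mat[of "qadj U" k k U k X l] assoc_mult_mat[of U k k "qadj U" k X l]
  by (simp_all add: qunitary_def)

lemma qunitary_mult:
  assumes U: "qunitary k U" and V: "qunitary k V"
  shows "qunitary k (U * V)"
proof -
  have carriers: "U \<in> carrier_mat k k" "V \<in> carrier_mat k k"
    using U V by (simp_all add: qunitary_carrier)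
  have "qadj (U * V) * (U * V) = qadj V * (qadj U * (U * V))"
    using carriers by (simp add: qadj_mult assoc_mult_mat[of _ k k _ k _ k])
  also have "\<dots> = 1\<^sub>m k"
    using qunitary_cancel_left(1)[OF U carriers(2)] V by (simp add: qunitary_def)
  finally have "qadj (U * V) * (U * V) = 1\<^sub>m k" .
  moreover have "(U * V) * qadj (U * V) = U * (V * (qadj V * qadj U))"
    using carriers
    by (simp add: qadj_mult assoc_mult_mat[of _ k k _ k _ k] mult_carrier_mat[of _ k k _ k])
  moreover have "\<dots> = 1\<^sub>m k"
    using qunitary_cancel_left(2)[OF V qadj_carrier[OF carriers(1)]] U by (simp add: qunitary_def)
  ultimately show ?thesis
    using carriers by (simp add: qunitary_def)
qed

lemma qunitary_col_inner:
  assumes U: "qunitary k U" and "i < k" "j < k"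
  shows "(\<Sum>t<k. qcnj (U $$ (t, i)) * U $$ (t, j)) = (if i = j then 1 else 0)"
proof -
  have "(qadj U * U) $$ (i, j) = (\<Sum>t<k. qcnj (U $$ (t, i)) * U $$ (t, j))"
    using assms qunitary_carrier[OF U] by (simp add: index_mult_mat_sum[of _ k k _ k])
  then show ?thesis
    using assms by (simp add: qunitary_def)
qed

lemma qunitary_col_norm:
  assumes "qunitary k U" "j < k"
  shows "(\<Sum>t<k. qnorm2 (U $$ (t, j))) = 1"
  using arg_cong[OF qunitary_col_inner[OF assms(1,2,2)], of qre]
  by (simp add: qre_sum qcnj_mult_self)

lemma qunitary_row_norm:
  assumes "qunitary k U" "i < k"
  shows "(\<Sum>t<k. qnorm2 (U $$ (i, t))) = 1"
  using qunitary_col_norm[OF qunitary_qadj[OF assms(1)] assms(2)] assms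
    carrier_matD[OF qunitary_carrier[OF assms(1)]]
  by simp

lemma diag_rect_carrier [simp]: "diag_rect m n s \<in> carrier_mat m n"
  by (simp add: diag_rect_def)

lemma diag_rect_dims [simp]: "dim_row (diag_rect m n s) = m" "dim_col (diag_rect m n s) = n"
  by (simp_all add: diag_rect_def)

lemma diag_rect_index [simp]:
  "i < m \<Longrightarrow> j < n \<Longrightarrow> diag_rect m n s $$ (i, j) = (if i = j then qreal (s i) else 0)"
  by (simp add: diag_rect_def)

lemma qadj_diag_rect [simp]: "qadj (diag_rect m n s) = diag_rect n m s"
  by (rule eq_matI) auto

lemma mult_diag_rect_index:
  assumes "M \<in> carrier_mat k p" "i < k" "j < q"
  shows "(M * diag_rect p q s) $$ (i, j) = (if j < p then M $$ (i, j) * qreal (s j) else 0)"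
  using assms by (simp add: index_mult_mat_sum[of _ k p _ q] if_distrib[of "(*) _"] cong: if_cong)

lemma diag_rect_mult_index:
  assumes "M \<in> carrier_mat q k" "i < p" "j < k"
  shows "(diag_rect p q s * M) $$ (i, j) = (if i < q then qreal (s i) * M $$ (i, j) else 0)"
  using assms by (simp add: index_mult_mat_sum[of _ p q _ k] if_distrib[of "\<lambda>x. x * _"] cong: if_cong)

lemma diag_rect_commute:
  assumes P: "P \<in> carrier_mat m m" and R: "R \<in> carrier_mat n n" and "n \<le> m"
    and restrict: "\<And>i j. i < n \<Longrightarrow> j < n \<Longrightarrow> P $$ (i, j) = R $$ (i, j)"
    and lower: "\<And>i j. n \<le> i \<Longrightarrow> i < m \<Longrightarrow> j < n \<Longrightarrow> P $$ (i, j) = 0"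
    and support: "\<And>i j. i < n \<Longrightarrow> j < n \<Longrightarrow> R $$ (i, j) \<noteq> 0 \<Longrightarrow> b i = b j"
  shows "P * diag_rect m n b = diag_rect m n b * R"
proof (rule eq_matI)
  fix i j assume "i < dim_row (diag_rect m n b * R)" "j < dim_col (diag_rect m n b * R)"
  then have "i < m" "j < n"
    using R by (simp_all add: index_mult_mat(2,3))
  have "P $$ (i, j) * qreal (b j) = (if i < n then qreal (b i) * R $$ (i, j) else 0)"
  proof (cases "i < n")
    case True
    show ?thesis
    proof (cases "R $$ (i, j) = 0")
      case False
      then have "b i = b j"
        using support True \<open>j < n\<close> by blast
      then show ?thesis
        using True restrict[OF True \<open>j < n\<close>] by (simp add: qreal_commute[of "b j"])
    qed (simp add: restrict True \<open>j < n\<close>)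
  qed (simp add: lower \<open>i < m\<close> \<open>j < n\<close>)
  then show "(P * diag_rect m n b) $$ (i, j) = (diag_rect m n b * R) $$ (i, j)"
    using \<open>i < m\<close> \<open>j < n\<close> \<open>n \<le> m\<close> by (simp add: mult_diag_rect_index[OF P] diag_rect_mult_index[OF R])
qed (use P R in \<open>simp_all add: index_mult_mat(2,3)\<close>)

definition qsvd :: "nat \<Rightarrow> nat \<Rightarrow> quat mat \<Rightarrow> quat mat \<Rightarrow> quat mat \<Rightarrow> (nat \<Rightarrow> real) \<Rightarrow> bool" where
  "qsvd m n A U V s \<longleftrightarrow> qunitary m U \<and> qunitary n V \<and> A = U * diag_rect m n s * qadj V"

lemma qsvd_carrier: "qsvd m n A U V s \<Longrightarrow> A \<in> carrier_mat m n"
  unfolding qsvd_def by (metis diag_rect_carrier mult_carrier_mat qadj_carrier qunitary_carrier)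

lemma svd_index:
  assumes "U \<in> carrier_mat m m" "V \<in> carrier_mat n n" "n \<le> m" "i < m" "j < n"
  shows "(U * diag_rect m n s * qadj V) $$ (i, j) = (\<Sum>k<n. U $$ (i, k) * qreal (s k) * qcnj (V $$ (j, k)))"
  using assms by (simp add: index_mult_mat_sum[of _ m n _ n] mult_diag_rect_index[of _ m m])

lemma qre_qtrace_mult_commute:
  assumes A: "A \<in> carrier_mat k l" and B: "B \<in> carrier_mat l k"
  shows "qre (qtrace (A * B)) = qre (qtrace (B * A))"
proof -
  have "qre (qtrace (A * B)) = (\<Sum>i<k. \<Sum>t<l. qre (A $$ (i, t) * B $$ (t, i)))"
    using A B by (simp add: qtrace_def index_mult_mat(2) index_mult_mat_sum[OF A B] qre_sum)
  also have "\<dots> = (\<Sum>t<l. \<Sum>i<k. qre (B $$ (t, i) * A $$ (i, t)))"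
    by (subst sum.swap) (simp add: qre_mult_commute)
  also have "\<dots> = qre (qtrace (B * A))"
    using A B by (simp add: qtrace_def index_mult_mat(2) index_mult_mat_sum[OF B A] qre_sum)
  finally show ?thesis .
qed

lemma qre_qtrace_qadj_mult_commute:
  assumes X: "X \<in> carrier_mat m n" and Y: "Y \<in> carrier_mat m n"
  shows "qre (qtrace (qadj X * Y)) = qre (qtrace (qadj Y * X))"
proof -
  have "qadj (qadj X * Y) = qadj Y * X"
    using qadj_mult_carrier[OF qadj_carrier[OF X] Y] by simp
  moreover have "qre (qtrace (qadj M)) = qre (qtrace M)" if "M \<in> carrier_mat n n" for M
    using that by (simp add: qtrace_def qre_sum)
  ultimately show ?thesis
    using X Y by (metis mult_carrier_mat qadj_carrier)
qed

lemma qre_qtrace_diag_rect_mult: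
  assumes X: "X \<in> carrier_mat m n" and "n \<le> m"
  shows "qre (qtrace (diag_rect n m a * X)) = (\<Sum>i<n. a i * qre (X $$ (i, i)))"
  using assms by (simp add: qtrace_def index_mult_mat(2) diag_rect_mult_index[OF X] qre_sum)

definition coupling :: "nat \<Rightarrow> quat mat \<Rightarrow> quat mat \<Rightarrow> (nat \<Rightarrow> real) \<Rightarrow> nat \<Rightarrow> real" where
  "coupling n W Z b i = (\<Sum>j<n. b j * qre (W $$ (i, j) * qcnj (Z $$ (i, j))))"

lemma re_trace_qsvd:
  assumes nm: "n \<le> m" and A: "qsvd m n A U1 V1 a" and B: "qsvd m n B U2 V2 b"
  shows "qre (qtrace (qadj A * B)) = (\<Sum>i<n. a i * coupling n (qadj U1 * U2) (qadj V1 * V2) b i)"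
proof -
  define W where "W = qadj U1 * U2"
  define Z where "Z = qadj V1 * V2"
  have U1: "U1 \<in> carrier_mat m m" and U2: "U2 \<in> carrier_mat m m"
    and V1: "V1 \<in> carrier_mat n n" and V2: "V2 \<in> carrier_mat n n"
    using A B by (simp_all add: qsvd_def qunitary_carrier)
  then have W: "W \<in> carrier_mat m m" and Z: "Z \<in> carrier_mat n n"
    unfolding W_def Z_def by (metis mult_carrier_mat qadj_carrier)+
  note dims = carrier_matD[OF U1] carrier_matD[OF U2] carrier_matD[OF V1] carrier_matD[OF V2]
  define X where "X = diag_rect n m a * W * diag_rect m n b * qadj V2"
  have X: "X \<in> carrier_mat n n"
    using W V2 by (intro carrier_matI) (simp_all add: X_def index_mult_mat(2,3))
  have "qadj A * B = V1 * X"
    using A B dims by (simp add: qsvd_def X_def W_def qadj_mult assoc_mult_mat_dims index_mult_mat(2,3))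
  then have "qre (qtrace (qadj A * B)) = qre (qtrace (X * V1))"
    using qre_qtrace_mult_commute[OF V1 X] by simp
  also have "X * V1 = diag_rect n m a * (W * diag_rect m n b * qadj Z)"
    using dims by (simp add: X_def W_def Z_def qadj_mult assoc_mult_mat_dims index_mult_mat(2,3))
  also have "qre (qtrace \<dots>) = (\<Sum>i<n. a i * qre ((W * diag_rect m n b * qadj Z) $$ (i, i)))"
    using W Z by (intro qre_qtrace_diag_rect_mult nm carrier_matI) (simp_all add: index_mult_mat(2,3))
  also have "\<dots> = (\<Sum>i<n. a i * coupling n W Z b i)"
    using W Z nm by (simp add: svd_index coupling_def qre_sum qre_mult_qreal_mult)
  finally show ?thesis
    by (simp add: W_def Z_def)
qed

section \<open>The trace inequality\<close>

definition desc_nonneg :: "nat \<Rightarrow> (nat \<Rightarrow> real) \<Rightarrow> bool" where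
  "desc_nonneg n s \<longleftrightarrow> (\<forall>i j. i \<le> j \<longrightarrow> j < n \<longrightarrow> s j \<le> s i) \<and> (\<forall>i<n. 0 \<le> s i)"

lemma sum_by_parts:
  fixes a y :: "nat \<Rightarrow> 'a :: comm_ring_1"
  assumes "r \<le> k"
  shows "(\<Sum>i\<in>{r..k}. a i * y i) =
    (\<Sum>j\<in>{r..<k}. (a j - a (Suc j)) * (\<Sum>i\<in>{r..j}. y i)) + a k * (\<Sum>i\<in>{r..k}. y i)"
  using assms by (induction k rule: dec_induct) (simp_all add: algebra_simps)

lemma sum_by_parts_lower_bound:
  fixes a y :: "nat \<Rightarrow> real"
  assumes a: "desc_nonneg n a"
    and partial_sums: "\<And>k. r \<le> k \<Longrightarrow> k < n \<Longrightarrow> 0 \<le> (\<Sum>i\<in>{r..k}. y i)"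
    and "r \<le> k" "k < n"
  shows "(a k - (if Suc k < n then a (Suc k) else 0)) * (\<Sum>i\<in>{r..k}. y i) \<le> (\<Sum>i\<in>{r..<n}. a i * y i)"
proof -
  let ?T = "\<lambda>j. (a j - a (Suc j)) * (\<Sum>i\<in>{r..j}. y i)"
  have T_nonneg: "0 \<le> ?T j" if "j \<in> {r..<n - 1}" for j
    using that a partial_sums[of j] by (auto simp: desc_nonneg_def)
  have last_nonneg: "0 \<le> a (n - 1) * (\<Sum>i\<in>{r..n - 1}. y i)"
    using a partial_sums[of "n - 1"] assms(3,4) by (simp add: desc_nonneg_def)
  have "{r..<n} = {r..n - 1}"
    using assms(4) by auto
  then have parts: "(\<Sum>i\<in>{r..<n}. a i * y i) = sum ?T {r..<n - 1} + a (n - 1) * (\<Sum>i\<in>{r..n - 1}. y i)"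
    using sum_by_parts[of r "n - 1" a y] assms(3,4) by simp
  show ?thesis
  proof (cases "Suc k < n")
    case True
    then have "?T k \<le> sum ?T {r..<n - 1}"
      using assms(3) T_nonneg by (intro member_le_sum) auto
    then show ?thesis
      unfolding parts using True last_nonneg by simp
  next
    case False
    then have "k = n - 1"
      using assms(4) by simp
    moreover have "0 \<le> sum ?T {r..<n - 1}"
      using T_nonneg by (rule sum_nonneg)
    ultimately show ?thesis
      unfolding parts using False by simp
  qed
qed

lemma sum_by_parts_nonneg:
  fixes a y :: "nat \<Rightarrow> real"
  assumes a: "desc_nonneg n a"
    and partial_sums: "\<And>k. r \<le> k \<Longrightarrow> k < n \<Longrightarrow> 0 \<le> (\<Sum>i\<in>{r..k}. y i)"
  shows "0 \<le> (\<Sum>i\<in>{r..<n}. a i * y i)"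
proof (cases "r < n")
  case True
  have "0 \<le> (a r - (if Suc r < n then a (Suc r) else 0)) * (\<Sum>i\<in>{r..r}. y i)"
    using a partial_sums[of r] True by (intro mult_nonneg_nonneg) (auto simp: desc_nonneg_def)
  also have "\<dots> \<le> (\<Sum>i\<in>{r..<n}. a i * y i)"
    using True by (intro sum_by_parts_lower_bound[OF a partial_sums]) auto
  finally show ?thesis .
qed simp

lemma weighted_sum_le_segment_sum:
  fixes b D :: "nat \<Rightarrow> real"
  assumes b: "desc_nonneg n b"
    and D_bounds: "\<And>j. j < n \<Longrightarrow> 0 \<le> D j \<and> D j \<le> 1" and D_zero: "\<And>j. j < r \<Longrightarrow> D j = 0"
    and D_sum: "(\<Sum>j<n. D j) \<le> real (Suc k - r)" and "r \<le> k" "k < n"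
  shows "(\<Sum>j<n. b j * D j) \<le> (\<Sum>j\<in>{r..k}. b j)"
proof -
  define I :: "nat \<Rightarrow> real" where "I j = of_bool (j \<in> {r..k})" for j
  have termwise: "b j * D j - b j * I j \<le> b k * (D j - I j)" if "j < n" for j
  proof -
    consider "j < r" | "j \<in> {r..k}" | "k < j"
      by force
    then show ?thesis
    proof cases
      case 2
      then have "b k \<le> b j" "D j \<le> 1"
        using b D_bounds that assms(6) by (auto simp: desc_nonneg_def)
      then have "0 \<le> (b j - b k) * (1 - D j)"
        by simp
      then show ?thesis
        using 2 by (simp add: I_def algebra_simps)
    next
      case 3
      then have "b j \<le> b k" "0 \<le> D j"
        using b D_bounds that by (auto simp: desc_nonneg_def)
      then show ?thesis
        using 3 by (simp add: I_def mult_right_mono)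
    qed (simp add: I_def D_zero)
  qed
  have segment: "{..<n} \<inter> {j. r \<le> j \<and> j \<le> k} = {r..k}"
    using assms(6) by auto
  have "(\<Sum>j<n. b j * D j) - (\<Sum>j\<in>{r..k}. b j) = (\<Sum>j<n. b j * D j - b j * I j)"
    by (simp add: I_def sum_subtractf segment)
  also have "\<dots> \<le> (\<Sum>j<n. b k * (D j - I j))"
    by (rule sum_mono) (simp add: termwise)
  also have "\<dots> = b k * ((\<Sum>j<n. D j) - real (Suc k - r))"
    by (simp add: I_def sum_distrib_left[symmetric] sum_subtractf segment)
  also have "\<dots> \<le> 0"
    using D_sum b assms(6) by (simp add: desc_nonneg_def mult_nonneg_nonpos)
  finally show ?thesis
    by simp
qed

definition entry_weight :: "quat mat \<Rightarrow> quat mat \<Rightarrow> nat \<Rightarrow> nat \<Rightarrow> real" where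
  "entry_weight W Z i j = (qnorm2 (W $$ (i, j)) + qnorm2 (Z $$ (i, j))) / 2"

lemma entry_weight_nonneg: "0 \<le> entry_weight W Z i j"
  by (simp add: entry_weight_def)

lemma coupling_le_weighted:
  assumes "\<And>j. j < n \<Longrightarrow> 0 \<le> b j"
  shows "coupling n W Z b i \<le> (\<Sum>j<n. b j * entry_weight W Z i j)"
  unfolding coupling_def entry_weight_def using assms by (intro sum_mono mult_left_mono qre_mult_qcnj_le) auto

lemma entry_weight_row_sum_le:
  assumes W: "qunitary m W" and Z: "qunitary n Z" and "n \<le> m" "i < n"
  shows "(\<Sum>j<n. entry_weight W Z i j) \<le> 1"
proof -
  have "(\<Sum>j<n. qnorm2 (W $$ (i, j))) \<le> (\<Sum>j<m. qnorm2 (W $$ (i, j)))"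
    using assms by (intro sum_mono2) auto
  also have "\<dots> = 1"
    using qunitary_row_norm[OF W] assms by simp
  finally show ?thesis
    using qunitary_row_norm[OF Z \<open>i < n\<close>]
    by (simp add: entry_weight_def sum_divide_distrib[symmetric] sum.distrib)
qed

lemma entry_weight_col_sum_le:
  assumes W: "qunitary m W" and Z: "qunitary n Z" and "n \<le> m" "j < n" "I \<subseteq> {..<n}"
  shows "(\<Sum>i\<in>I. entry_weight W Z i j) \<le> 1"
proof -
  have "(\<Sum>i\<in>I. qnorm2 (W $$ (i, j))) \<le> (\<Sum>i<m. qnorm2 (W $$ (i, j)))"
    using assms by (intro sum_mono2) auto
  also have "\<dots> = 1"
    using qunitary_col_norm[OF W] assms by simp
  finally have "(\<Sum>i\<in>I. qnorm2 (W $$ (i, j))) \<le> 1" .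
  moreover have "(\<Sum>i\<in>I. qnorm2 (Z $$ (i, j))) \<le> (\<Sum>i<n. qnorm2 (Z $$ (i, j)))"
    using assms by (intro sum_mono2) auto
  ultimately show ?thesis
    using qunitary_col_norm[OF Z \<open>j < n\<close>]
    by (simp add: entry_weight_def sum_divide_distrib[symmetric] sum.distrib)
qed

lemma coupling_segment_sum_le:
  assumes W: "qunitary m W" and Z: "qunitary n Z" and nm: "n \<le> m" and b: "desc_nonneg n b"
    and "r \<le> k" "k < n"
    and lower_zero: "\<And>i j. r \<le> i \<Longrightarrow> i < n \<Longrightarrow> j < r \<Longrightarrow> W $$ (i, j) = 0 \<and> Z $$ (i, j) = 0"
  shows "(\<Sum>i\<in>{r..k}. coupling n W Z b i) \<le> (\<Sum>i\<in>{r..k}. b i)"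
proof -
  define D where "D j = (\<Sum>i\<in>{r..k}. entry_weight W Z i j)" for j
  have "(\<Sum>i\<in>{r..k}. coupling n W Z b i) \<le> (\<Sum>i\<in>{r..k}. \<Sum>j<n. b j * entry_weight W Z i j)"
    using b by (intro sum_mono coupling_le_weighted) (simp add: desc_nonneg_def)
  also have "\<dots> = (\<Sum>j<n. b j * D j)"
    unfolding D_def by (subst sum.swap) (simp add: sum_distrib_left)
  also have "\<dots> \<le> (\<Sum>i\<in>{r..k}. b i)"
  proof (rule weighted_sum_le_segment_sum[OF b])
    have "{r..k} \<subseteq> {..<n}"
      using assms(6) by auto
    then show "0 \<le> D j \<and> D j \<le> 1" if "j < n" for j
      unfolding D_def using entry_weight_col_sum_le[OF W Z nm that]
      by (auto intro: sum_nonneg entry_weight_nonneg)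
    show "D j = 0" if "j < r" for j
      unfolding D_def entry_weight_def using lower_zero that assms(6) by (auto intro!: sum.neutral)
    have "(\<Sum>j<n. D j) = (\<Sum>i\<in>{r..k}. \<Sum>j<n. entry_weight W Z i j)"
      unfolding D_def by (rule sum.swap)
    also have "\<dots> \<le> (\<Sum>i\<in>{r..k}. 1)"
      using assms(6) by (intro sum_mono entry_weight_row_sum_le[OF W Z nm]) auto
    finally show "(\<Sum>j<n. D j) \<le> real (Suc k - r)"
      by simp
  qed (use assms(5,6) in auto)
  finally show ?thesis .
qed

lemma coupling_sum_le:
  assumes W: "qunitary m W" and Z: "qunitary n Z" and nm: "n \<le> m"
    and a: "desc_nonneg n a" and b: "desc_nonneg n b"
  shows "(\<Sum>i<n. a i * coupling n W Z b i) \<le> (\<Sum>i<n. a i * b i)"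
proof -
  have "0 \<le> (\<Sum>i\<in>{0..<n}. a i * (b i - coupling n W Z b i))"
  proof (rule sum_by_parts_nonneg[OF a])
    fix k assume "0 \<le> k" "k < n"
    then show "0 \<le> (\<Sum>i\<in>{0..k}. b i - coupling n W Z b i)"
      using coupling_segment_sum_le[OF W Z nm b] by (simp add: sum_subtractf)
  qed
  then show ?thesis
    by (simp add: atLeast0LessThan algebra_simps sum_subtractf)
qed

section \<open>Equality: the coupling of a block start\<close>

definition leading_identity :: "nat \<Rightarrow> nat \<Rightarrow> quat mat \<Rightarrow> bool" where
  "leading_identity N r W \<longleftrightarrow>
    (\<forall>i<N. \<forall>j<N. (i < r \<or> j < r) \<longrightarrow> W $$ (i, j) = (if i = j then 1 else 0))"

lemma coupling_leading_identity:
  assumes "leading_identity m r W" "leading_identity n r Z" "n \<le> m" "i < r" "i < n"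
  shows "coupling n W Z b i = b i"
proof -
  have "coupling n W Z b i = (\<Sum>j<n. if j = i then b j else 0)"
    using assms unfolding coupling_def leading_identity_def by (intro sum.cong) auto
  then show ?thesis
    using assms(5) by simp
qed

lemma coupling_le_block_start:
  assumes W: "qunitary m W" and Z: "qunitary n Z" and nm: "n \<le> m" and b: "desc_nonneg n b"
    and "r \<le> i" "i < n" and lower_zero: "\<And>j. j < r \<Longrightarrow> W $$ (i, j) = 0 \<and> Z $$ (i, j) = 0"
  shows "coupling n W Z b i \<le> b r"
proof -
  have "coupling n W Z b i \<le> (\<Sum>j<n. b j * entry_weight W Z i j)"
    using b by (intro coupling_le_weighted) (simp add: desc_nonneg_def)
  also have "\<dots> \<le> (\<Sum>j<n. b r * entry_weight W Z i j)"
  proof (rule sum_mono)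
    fix j assume "j \<in> {..<n}"
    then show "b j * entry_weight W Z i j \<le> b r * entry_weight W Z i j"
      using b lower_zero[of j] by (cases "j < r") (auto simp: desc_nonneg_def entry_weight_def
          intro!: mult_right_mono)
  qed
  also have "\<dots> \<le> b r"
    using entry_weight_row_sum_le[OF W Z nm \<open>i < n\<close>] b assms(5,6)
    by (simp add: sum_distrib_left[symmetric] desc_nonneg_def mult_left_le)
  finally show ?thesis .
qed

lemma coupling_eq_tail:
  assumes W_id: "leading_identity m r W" and Z_id: "leading_identity n r Z" and "n \<le> m" "r \<le> n"
    and eq: "(\<Sum>i<n. a i * coupling n W Z b i) = (\<Sum>i<n. a i * b i)"
  shows "(\<Sum>i\<in>{r..<n}. a i * (b i - coupling n W Z b i)) = 0"
proof -
  let ?x = "coupling n W Z b"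
  have "(\<Sum>i<n. a i * (b i - ?x i)) = (\<Sum>i<r. a i * (b i - ?x i)) + (\<Sum>i\<in>{r..<n}. a i * (b i - ?x i))"
    using sum.atLeastLessThan_concat[of 0 r n, symmetric] \<open>r \<le> n\<close> by (simp add: atLeast0LessThan)
  also have "(\<Sum>i<r. a i * (b i - ?x i)) = 0"
    using coupling_leading_identity[OF W_id Z_id \<open>n \<le> m\<close>] \<open>r \<le> n\<close> by simp
  finally show ?thesis
    using eq by (simp add: algebra_simps sum_subtractf)
qed

text \<open>Equality in the Abel summation bound at the drop k forces the couplings on the block [r, k],
  each at most b r, to add up to the sum of b over the block.\<close>

lemma coupling_eq_block_start:
  assumes W: "qunitary m W" and Z: "qunitary n Z" and nm: "n \<le> m"
    and a: "desc_nonneg n a" and b: "desc_nonneg n b"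
    and W_id: "leading_identity m r W" and Z_id: "leading_identity n r Z"
    and eq: "(\<Sum>i<n. a i * coupling n W Z b i) = (\<Sum>i<n. a i * b i)"
    and "r \<le> k" "k < n" and a_drop: "0 < a k" "Suc k < n \<Longrightarrow> a (Suc k) < a k"
    and b_const: "\<And>i. i \<in> {r..k} \<Longrightarrow> b i = b r"
  shows "coupling n W Z b r = b r"
proof -
  let ?x = "coupling n W Z b"
  have lower_zero: "W $$ (i, j) = 0 \<and> Z $$ (i, j) = 0" if "r \<le> i" "i < n" "j < r" for i j
    using W_id Z_id that nm unfolding leading_identity_def by auto
  have "(a k - (if Suc k < n then a (Suc k) else 0)) * (\<Sum>i\<in>{r..k}. b i - ?x i)
      \<le> (\<Sum>i\<in>{r..<n}. a i * (b i - ?x i))"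
    using coupling_segment_sum_le[where r = r, OF W Z nm b _ _ lower_zero]
    by (intro sum_by_parts_lower_bound[OF a _ assms(9,10)]) (simp add: sum_subtractf)
  also have "\<dots> = 0"
    using coupling_eq_tail[OF W_id Z_id nm _ eq] assms(9,10) by simp
  finally have "(a k - (if Suc k < n then a (Suc k) else 0)) * (\<Sum>i\<in>{r..k}. b i - ?x i) \<le> 0" .
  moreover have "0 < a k - (if Suc k < n then a (Suc k) else 0)"
    using a_drop by simp
  moreover have "(\<Sum>i\<in>{r..k}. b i - ?x i) = (\<Sum>i\<in>{r..k}. b r - ?x i)"
    by (intro sum.cong refl) (metis b_const)
  ultimately have "(\<Sum>i\<in>{r..k}. b r - ?x i) \<le> 0"
    by (simp add: mult_le_0_iff)
  moreover have nonneg: "0 \<le> b r - ?x i" if "i \<in> {r..k}" for i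
  proof -
    have "r \<le> i" "i < n"
      using that assms(10) by auto
    then show ?thesis
      using coupling_le_block_start[OF W Z nm b \<open>r \<le> i\<close> \<open>i < n\<close>] lower_zero by simp
  qed
  ultimately have "(\<Sum>i\<in>{r..k}. b r - ?x i) = 0"
    by (intro antisym sum_nonneg) auto
  then have "b r - ?x r = 0"
    using sum_nonneg_0[of "{r..k}" "\<lambda>i. b r - ?x i" r] nonneg assms(9) by simp
  then show ?thesis
    by simp
qed

lemma coupling_defect:
  "c - coupling n W Z b i = c * (1 - (\<Sum>j<n. entry_weight W Z i j))
    + (\<Sum>j<n. (c - b j) * entry_weight W Z i j) + (\<Sum>j<n. b j * qnorm2 (W $$ (i, j) - Z $$ (i, j)) / 2)"
proof -
  have "coupling n W Z b i =
      (\<Sum>j<n. b j * (entry_weight W Z i j - qnorm2 (W $$ (i, j) - Z $$ (i, j)) / 2))"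
    unfolding coupling_def entry_weight_def
    by (intro sum.cong) (simp_all add: qre_mult_qcnj diff_divide_distrib)
  then show ?thesis
    by (simp add: algebra_simps sum_subtractf sum_distrib_left sum.distrib)
qed

lemma coupling_eq_row_weights:
  assumes W: "qunitary m W" and Z: "qunitary n Z" and nm: "n \<le> m" and b: "desc_nonneg n b"
    and "r < n" "0 < b r" and lower_zero: "\<And>j. j < r \<Longrightarrow> W $$ (r, j) = 0 \<and> Z $$ (r, j) = 0"
    and eq: "coupling n W Z b r = b r"
  shows "(\<Sum>j<n. entry_weight W Z r j) = 1"
    and "\<And>j. j < n \<Longrightarrow> b j \<noteq> b r \<Longrightarrow> entry_weight W Z r j = 0"
    and "\<And>j. j < n \<Longrightarrow> b j = b r \<Longrightarrow> W $$ (r, j) = Z $$ (r, j)"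
proof -
  define d where "d j = entry_weight W Z r j" for j
  define e where "e j = qnorm2 (W $$ (r, j) - Z $$ (r, j)) / 2" for j
  have d_terms: "0 \<le> (b r - b j) * d j" if "j < n" for j
  proof (cases "j < r")
    case True
    then show ?thesis
      using lower_zero by (simp add: d_def entry_weight_def)
  next
    case False
    then have "b j \<le> b r"
      using b that by (simp add: desc_nonneg_def)
    then show ?thesis
      by (simp add: d_def entry_weight_nonneg)
  qed
  have e_terms: "0 \<le> b j * e j" if "j < n" for j
    using b that by (simp add: desc_nonneg_def e_def)
  have "0 \<le> b r * (1 - (\<Sum>j<n. d j))"
    using entry_weight_row_sum_le[OF W Z nm \<open>r < n\<close>] \<open>0 < b r\<close> by (simp add: d_def)
  moreover have "0 \<le> (\<Sum>j<n. (b r - b j) * d j)"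
    by (rule sum_nonneg) (simp add: d_terms)
  moreover have "0 \<le> (\<Sum>j<n. b j * e j)"
    by (rule sum_nonneg) (simp add: e_terms)
  moreover have "b r * (1 - (\<Sum>j<n. d j)) + (\<Sum>j<n. (b r - b j) * d j) + (\<Sum>j<n. b j * e j) = 0"
    using coupling_defect[of "b r" n W Z b r] eq by (simp add: d_def e_def)
  ultimately have "b r * (1 - (\<Sum>j<n. d j)) = 0" and d_sum: "(\<Sum>j<n. (b r - b j) * d j) = 0"
    and e_sum: "(\<Sum>j<n. b j * e j) = 0"
    by linarith+
  then show "(\<Sum>j<n. entry_weight W Z r j) = 1"
    using \<open>0 < b r\<close> by (simp add: d_def)
  show "entry_weight W Z r j = 0" if "j < n" "b j \<noteq> b r" for j
    using sum_nonneg_0[OF finite_lessThan _ d_sum, of j] d_terms that by (simp add: d_def)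
  show "W $$ (r, j) = Z $$ (r, j)" if "j < n" "b j = b r" for j
    using sum_nonneg_0[OF finite_lessThan _ e_sum, of j] e_terms that \<open>0 < b r\<close> by (simp add: e_def)
qed

lemma coupling_eq_row:
  assumes W: "qunitary m W" and Z: "qunitary n Z" and nm: "n \<le> m" and b: "desc_nonneg n b"
    and "r < n" "0 < b r" and lower_zero: "\<And>j. j < r \<Longrightarrow> W $$ (r, j) = 0 \<and> Z $$ (r, j) = 0"
    and eq: "coupling n W Z b r = b r"
  shows row_eq: "\<And>j. j < n \<Longrightarrow> W $$ (r, j) = Z $$ (r, j)"
    and row_block: "\<And>j. j < n \<Longrightarrow> Z $$ (r, j) \<noteq> 0 \<Longrightarrow> b j = b r"
    and row_tail: "\<And>j. n \<le> j \<Longrightarrow> j < m \<Longrightarrow> W $$ (r, j) = 0"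
proof -
  have weights: "(\<Sum>j<n. entry_weight W Z r j) = 1"
    "\<And>j. j < n \<Longrightarrow> b j \<noteq> b r \<Longrightarrow> entry_weight W Z r j = 0"
    "\<And>j. j < n \<Longrightarrow> b j = b r \<Longrightarrow> W $$ (r, j) = Z $$ (r, j)"
    using coupling_eq_row_weights[OF W Z nm b \<open>r < n\<close> \<open>0 < b r\<close> _ eq] lower_zero by blast+
  have off_block: "W $$ (r, j) = 0 \<and> Z $$ (r, j) = 0" if "j < n" "b j \<noteq> b r" for j
    using weights(2)[OF that] by (simp add: entry_weight_def add_nonneg_eq_0_iff)
  show "W $$ (r, j) = Z $$ (r, j)" if "j < n" for j
    using weights(3)[OF that] off_block[OF that] by (cases "b j = b r") simp_all
  show "b j = b r" if "j < n" "Z $$ (r, j) \<noteq> 0" for j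
    using off_block that by blast
  have "(\<Sum>j<n. qnorm2 (W $$ (r, j))) = 1"
    using weights(1) qunitary_row_norm[OF Z \<open>r < n\<close>]
    by (simp add: entry_weight_def sum_divide_distrib[symmetric] sum.distrib)
  moreover have "(\<Sum>j<m. qnorm2 (W $$ (r, j))) =
      (\<Sum>j<n. qnorm2 (W $$ (r, j))) + (\<Sum>j\<in>{n..<m}. qnorm2 (W $$ (r, j)))"
    using sum.atLeastLessThan_concat[of 0 n m, symmetric] nm by (simp add: atLeast0LessThan)
  ultimately have "(\<Sum>j\<in>{n..<m}. qnorm2 (W $$ (r, j))) = 0"
    using qunitary_row_norm[OF W, of r] \<open>r < n\<close> nm by simp
  then show "W $$ (r, j) = 0" if "n \<le> j" "j < m" for j
    using that by (simp add: sum_nonneg_eq_0_iff)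
qed

section \<open>Quaternionic Householder reflections\<close>

lemma sum_delta_minus_outer_square:
  fixes x y :: "nat \<Rightarrow> 'a :: ring_1"
  assumes "i < N" "j < N"
  shows "(\<Sum>t<N. ((if i = t then 1 else 0) - x i * y t) * ((if t = j then 1 else 0) - x t * y j)) =
    (if i = j then 1 else 0) - x i * (2 - (\<Sum>t<N. y t * x t)) * y j"
proof -
  let ?d = "\<lambda>k l. if k = l then 1 else 0 :: 'a"
  have "(\<Sum>t<N. (?d i t - x i * y t) * (?d t j - x t * y j)) =
      (\<Sum>t<N. ?d i t * ?d t j) - (\<Sum>t<N. ?d i t * (x t * y j)) - (\<Sum>t<N. x i * y t * ?d t j)
      + (\<Sum>t<N. x i * (y t * x t) * y j)"
    by (simp add: algebra_simps sum_subtractf sum.distrib)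
  also have "\<dots> = ?d i j - x i * y j - x i * y j + x i * (\<Sum>t<N. y t * x t) * y j"
    using sum_delta_mult(1)[OF assms(1), of "\<lambda>t. ?d t j"]
      sum_delta_mult(1)[OF assms(1), of "\<lambda>t. x t * y j"]
      sum_delta_mult(2)[OF assms(2), of "\<lambda>t. x i * y t"]
    by (simp add: sum_distrib_left sum_distrib_right)
  also have "\<dots> = ?d i j - x i * (2 - (\<Sum>t<N. y t * x t)) * y j"
    by (simp add: algebra_simps mult_2)
  finally show ?thesis .
qed

text \<open>For w = 0 this is the identity, as 2 / 0 = 0.\<close>

definition householder :: "nat \<Rightarrow> (nat \<Rightarrow> quat) \<Rightarrow> quat mat" where
  "householder N w = mat N N (\<lambda>(i, j).
     (if i = j then 1 else 0) - w i * qreal (2 / (\<Sum>k<N. qnorm2 (w k))) * qcnj (w j))"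

lemma householder_carrier [simp]: "householder N w \<in> carrier_mat N N"
  by (simp add: householder_def)

lemma householder_dims [simp]: "dim_row (householder N w) = N" "dim_col (householder N w) = N"
  by (simp_all add: householder_def)

lemma householder_index:
  "i < N \<Longrightarrow> j < N \<Longrightarrow>
    householder N w $$ (i, j) = (if i = j then 1 else 0) - w i * qreal (2 / (\<Sum>k<N. qnorm2 (w k))) * qcnj (w j)"
  by (simp add: householder_def)

lemma qadj_householder: "qadj (householder N w) = householder N w"
proof (rule eq_matI)
  fix i j assume "i < dim_row (householder N w)" "j < dim_col (householder N w)"
  then show "qadj (householder N w) $$ (i, j) = householder N w $$ (i, j)"
    by (simp add: householder_index qcnj_diff qcnj_mult mult.assoc)
qed simp_all

lemma householder_square: "householder N w * householder N w = 1\<^sub>m N"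
proof (rule eq_matI)
  fix i j assume "i < dim_row (1\<^sub>m N)" "j < dim_col (1\<^sub>m N)"
  then have i: "i < N" and j: "j < N"
    by simp_all
  define c where "c = 2 / (\<Sum>k<N. qnorm2 (w k))"
  have "(\<Sum>t<N. qcnj (w t) * (w t * qreal c)) = qreal ((\<Sum>k<N. qnorm2 (w k)) * c)"
    by (simp add: mult.assoc[symmetric] qcnj_mult_self qreal_mult qreal_sum sum_distrib_right)
  also have "(\<Sum>k<N. qnorm2 (w k)) * c = (if c = 0 then 0 else 2)"
    by (simp add: c_def)
  finally have "w i * qreal c * (2 - (\<Sum>t<N. qcnj (w t) * (w t * qreal c))) = 0"
    by (cases "c = 0") (simp_all add: qreal_2)
  then have "(\<Sum>t<N. householder N w $$ (i, t) * householder N w $$ (t, j)) = (if i = j then 1 else 0)"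
    using sum_delta_minus_outer_square[OF i j, of "\<lambda>k. w k * qreal c" "\<lambda>k. qcnj (w k)"] i j
    by (simp add: householder_index c_def mult.assoc)
  then show "(householder N w * householder N w) $$ (i, j) = 1\<^sub>m N $$ (i, j)"
    using i j by (simp add: index_mult_mat_sum[of _ N N _ N])
qed (simp_all add: index_mult_mat(2,3))

lemma qunitary_householder: "qunitary N (householder N w)"
  by (simp add: qunitary_def qadj_householder householder_square)

definition qdiag :: "nat \<Rightarrow> (nat \<Rightarrow> quat) \<Rightarrow> quat mat" where
  "qdiag N d = mat N N (\<lambda>(i, j). if i = j then d i else 0)"

lemma qdiag_carrier [simp]: "qdiag N d \<in> carrier_mat N N"
  by (simp add: qdiag_def)

lemma qdiag_dims [simp]: "dim_row (qdiag N d) = N" "dim_col (qdiag N d) = N"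
  by (simp_all add: qdiag_def)

lemma qdiag_index [simp]: "i < N \<Longrightarrow> j < N \<Longrightarrow> qdiag N d $$ (i, j) = (if i = j then d i else 0)"
  by (simp add: qdiag_def)

lemma qadj_qdiag: "qadj (qdiag N d) = qdiag N (\<lambda>i. qcnj (d i))"
  by (rule eq_matI) (auto simp: qdiag_def)

lemma mult_qdiag_index:
  assumes "M \<in> carrier_mat k N" "i < k" "j < N"
  shows "(M * qdiag N d) $$ (i, j) = M $$ (i, j) * d j"
  using assms sum_delta_mult(2)[of j N "\<lambda>t. M $$ (i, t) * d t"]
  by (simp add: index_mult_mat_sum[of _ k N _ N] qdiag_def if_distrib[of "(*) _"] cong: if_cong)

lemma qunitary_qdiag:
  assumes "\<And>i. i < N \<Longrightarrow> qnorm2 (d i) = 1"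
  shows "qunitary N (qdiag N d)"
proof -
  have "qadj (qdiag N d) * qdiag N d = 1\<^sub>m N" "qdiag N d * qadj (qdiag N d) = 1\<^sub>m N"
    using assms by (auto intro!: eq_matI simp: qadj_qdiag mult_qdiag_index[OF qdiag_carrier]
        index_mult_mat(2,3) qcnj_mult_self mult_qcnj_self)
  then show ?thesis
    by (simp add: qunitary_def)
qed

definition reflection_vec :: "(nat \<Rightarrow> quat) \<Rightarrow> nat \<Rightarrow> nat \<Rightarrow> quat" where
  "reflection_vec v r k = (if k = r then 1 else 0) - v k * qphase (v r)"

text \<open>With \<open>\<theta> = qphase (v r)\<close> the inner product of \<open>e\<^sub>r\<close> and \<open>v \<theta>\<close> is the real number \<open>|v r|\<close>, so
  the reflection along \<open>e\<^sub>r - v \<theta>\<close> maps \<open>e\<^sub>r\<close> to \<open>v \<theta>\<close>; the diagonal factor removes \<open>\<theta>\<close> again.\<close>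

definition col_completion :: "nat \<Rightarrow> (nat \<Rightarrow> quat) \<Rightarrow> nat \<Rightarrow> quat mat" where
  "col_completion N v r =
     householder N (reflection_vec v r) * qdiag N (\<lambda>k. if k = r then qcnj (qphase (v r)) else 1)"

lemma col_completion_carrier [simp]: "col_completion N v r \<in> carrier_mat N N"
  unfolding col_completion_def by (rule mult_carrier_mat[OF householder_carrier qdiag_carrier])

lemma col_completion_dims [simp]: "dim_row (col_completion N v r) = N" "dim_col (col_completion N v r) = N"
  by (simp_all add: col_completion_def index_mult_mat(2,3))

lemma qunitary_col_completion: "qunitary N (col_completion N v r)"
  unfolding col_completion_def
  by (intro qunitary_mult qunitary_householder qunitary_qdiag) (simp add: qnorm2_qphase)

lemma col_completion_index:
  "i < N \<Longrightarrow> j < N \<Longrightarrow> col_completion N v r $$ (i, j) =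
    householder N (reflection_vec v r) $$ (i, j) * (if j = r then qcnj (qphase (v r)) else 1)"
  by (simp add: col_completion_def mult_qdiag_index[OF householder_carrier])

lemma reflection_vec_norm:
  assumes "r < N" and v: "(\<Sum>k<N. qnorm2 (v k)) = 1"
  shows "(\<Sum>k<N. qnorm2 (reflection_vec v r k)) = 2 - 2 * sqrt (qnorm2 (v r))"
proof -
  let ?s = "sqrt (qnorm2 (v r))"
  have "qnorm2 (reflection_vec v r k) = (if k = r then 1 - 2 * ?s else 0) + qnorm2 (v k)" for k
  proof (cases "k = r")
    case True
    then have "reflection_vec v r k = qreal (1 - ?s)"
      by (simp add: reflection_vec_def mult_qphase qreal_diff[symmetric])
    then show ?thesis
      using True by (simp add: power2_eq_square algebra_simps)
  next
    case False
    then show ?thesis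
      by (simp add: reflection_vec_def qnorm2_mult qnorm2_qphase)
  qed
  then show ?thesis
    using assms by (simp add: sum.distrib)
qed

lemma col_completion_col_r:
  assumes "r < N" and v: "(\<Sum>k<N. qnorm2 (v k)) = 1" and "i < N"
  shows "col_completion N v r $$ (i, r) = v i"
proof -
  let ?w = "reflection_vec v r" and ?s = "sqrt (qnorm2 (v r))"
  have w_r: "?w r = qreal (1 - ?s)"
    by (simp add: reflection_vec_def mult_qphase qreal_diff[symmetric])
  have "householder N ?w $$ (i, r) = v i * qphase (v r)"
  proof (cases "?s = 1")
    case True
    then have "(\<Sum>k<N. qnorm2 (?w k)) = 0"
      using reflection_vec_norm[OF assms(1,2)] by simp
    then have "?w i = 0"
      using \<open>i < N\<close> by (simp add: sum_nonneg_eq_0_iff)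
    then show ?thesis
      using assms by (simp add: householder_index reflection_vec_def split: if_splits)
  next
    case False
    then have "2 / (2 - 2 * ?s) * (1 - ?s) = 1"
      by (simp add: field_simps)
    then have "2 / (\<Sum>k<N. qnorm2 (?w k)) * (1 - ?s) = 1"
      by (simp add: reflection_vec_norm[OF assms(1,2)])
    then have "qreal (2 / (\<Sum>k<N. qnorm2 (?w k))) * qcnj (?w r) = 1"
      by (metis w_r qcnj_qreal qreal_mult qreal_1)
    then have "householder N ?w $$ (i, r) = (if i = r then 1 else 0) - ?w i"
      using assms by (simp add: householder_index mult.assoc)
    then show ?thesis
      by (simp add: reflection_vec_def)
  qed
  then show ?thesis
    using assms by (simp add: col_completion_index mult.assoc qphase_mult_qcnj)
qed

lemma col_completion_col_fixed:
  assumes "i < N" "j < N" "j \<noteq> r" "v j = 0"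
  shows "col_completion N v r $$ (i, j) = (if i = j then 1 else 0)"
  using assms by (simp add: col_completion_index householder_index reflection_vec_def)

lemma col_completion_off_support:
  assumes "i < N" "j < N" "i \<noteq> j" "(i \<noteq> r \<and> v i = 0) \<or> (j \<noteq> r \<and> v j = 0)"
  shows "col_completion N v r $$ (i, j) = 0"
  using assms by (auto simp: col_completion_index householder_index reflection_vec_def)

lemma col_completion_restrict:
  assumes "r < n" "n \<le> m" "\<And>k. n \<le> k \<Longrightarrow> v k = 0" "i < n" "j < n"
  shows "col_completion m v r $$ (i, j) = col_completion n v r $$ (i, j)"
proof -
  have "(\<Sum>k<m. qnorm2 (reflection_vec v r k)) = (\<Sum>k<n. qnorm2 (reflection_vec v r k))"
    using assms(1-3) by (intro sum.mono_neutral_right) (auto simp: reflection_vec_def)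
  then show ?thesis
    using assms by (simp add: col_completion_index householder_index)
qed

lemma col_completion_diag_rect:
  assumes "r < n" "n \<le> m" and v_zero: "\<And>k. n \<le> k \<Longrightarrow> v k = 0"
    and v_block: "\<And>k. k < n \<Longrightarrow> v k \<noteq> 0 \<Longrightarrow> b k = b r"
  shows "col_completion m v r * diag_rect m n b = diag_rect m n b * col_completion n v r"
proof (rule diag_rect_commute[OF col_completion_carrier col_completion_carrier \<open>n \<le> m\<close>])
  show "col_completion m v r $$ (i, j) = col_completion n v r $$ (i, j)" if "i < n" "j < n" for i j
    using col_completion_restrict[OF assms(1-3) that] .
  show "col_completion m v r $$ (i, j) = 0" if "n \<le> i" "i < m" "j < n" for i j
    using that assms(1,2) v_zero[of i] by (intro col_completion_off_support) auto
  show "b i = b j" if "i < n" "j < n" "col_completion n v r $$ (i, j) \<noteq> 0" for i j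
  proof -
    have "i = j \<or> ((i = r \<or> v i \<noteq> 0) \<and> (j = r \<or> v j \<noteq> 0))"
      using col_completion_off_support[of i n j r v] that by blast
    then show ?thesis
      using that(1,2) by (metis v_block)
  qed
qed

section \<open>Equality: aligning the singular vectors\<close>

definition cols_agree :: "nat \<Rightarrow> nat \<Rightarrow> quat mat \<Rightarrow> quat mat \<Rightarrow> bool" where
  "cols_agree N r U U' \<longleftrightarrow> (\<forall>i<N. \<forall>j<r. U $$ (i, j) = U' $$ (i, j))"

lemma cols_agree_sym: "cols_agree N r U U' \<Longrightarrow> cols_agree N r U' U"
  by (simp add: cols_agree_def)

lemma cols_agree_leading_identity:
  assumes U: "qunitary N U" and U': "qunitary N U'" and agree: "cols_agree N r U U'"
  shows "leading_identity N r (qadj U * U')"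
  unfolding leading_identity_def
proof (intro allI impI)
  fix i j assume "i < N" "j < N" "i < r \<or> j < r"
  have "(qadj U * U') $$ (i, j) = (\<Sum>t<N. qcnj (U $$ (t, i)) * U' $$ (t, j))"
    using \<open>i < N\<close> \<open>j < N\<close> qunitary_carrier[OF U] qunitary_carrier[OF U']
    by (simp add: index_mult_mat_sum[of _ N N _ N])
  also have "\<dots> = (if i = j then 1 else 0)"
  proof (cases "j < r")
    case True
    then show ?thesis
      using agree qunitary_col_inner[OF U \<open>i < N\<close> \<open>j < N\<close>] by (simp add: cols_agree_def)
  next
    case False
    then show ?thesis
      using agree \<open>i < r \<or> j < r\<close> qunitary_col_inner[OF U' \<open>i < N\<close> \<open>j < N\<close>]
      by (simp add: cols_agree_def)
  qed
  finally show "(qadj U * U') $$ (i, j) = (if i = j then 1 else 0)" .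
qed

lemma cols_agree_mult_Suc:
  assumes U: "qunitary N U" and U': "qunitary N U'" and agree: "cols_agree N r U U'" and "r < N"
    and P: "P \<in> carrier_mat N N" and P_r: "col P r = col (qadj U' * U) r"
    and P_lower: "\<And>j. j < r \<Longrightarrow> col P j = unit_vec N j"
  shows "cols_agree N (Suc r) U (U' * P)"
  unfolding cols_agree_def
proof (intro allI impI)
  fix i j assume "i < N" "j < Suc r"
  have carriers: "U \<in> carrier_mat N N" "U' \<in> carrier_mat N N"
    using U U' by (simp_all add: qunitary_carrier)
  show "U $$ (i, j) = (U' * P) $$ (i, j)"
  proof (cases "j < r")
    case True
    then have "(U' * P) $$ (i, j) = (U' * 1\<^sub>m N) $$ (i, j)"
      using \<open>i < N\<close> \<open>r < N\<close> carriers P P_lower by (intro index_mult_mat_col_cong) auto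
    then show ?thesis
      using True \<open>i < N\<close> carriers agree by (simp add: cols_agree_def)
  next
    case False
    then have "j = r"
      using \<open>j < Suc r\<close> by simp
    then have "(U' * P) $$ (i, j) = (U' * (qadj U' * U)) $$ (i, j)"
      using \<open>i < N\<close> \<open>r < N\<close> carriers P P_r
      by (intro index_mult_mat_col_cong) (auto simp: index_mult_mat(3))
    then show ?thesis
      using qunitary_cancel_left(2)[OF U' carriers(1)] by simp
  qed
qed

lemma qsvd_mult_unitaries:
  assumes B: "qsvd m n B U V b" and P: "qunitary m P" and R: "qunitary n R"
    and commute: "P * diag_rect m n b = diag_rect m n b * R"
  shows "qsvd m n B (U * P) (V * R) b"
proof -
  have carriers: "U \<in> carrier_mat m m" "V \<in> carrier_mat n n" "P \<in> carrier_mat m m" "R \<in> carrier_mat n n"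
    using B P R by (simp_all add: qsvd_def qunitary_carrier)
  note dims = carrier_matD[OF carriers(1)] carrier_matD[OF carriers(2)] carrier_matD[OF carriers(3)]
    carrier_matD[OF carriers(4)]
  have "U * P * diag_rect m n b * qadj (V * R) = U * ((P * diag_rect m n b) * (qadj R * qadj V))"
    using dims by (simp add: qadj_mult assoc_mult_mat_dims index_mult_mat(2,3))
  also have "\<dots> = U * (diag_rect m n b * (R * (qadj R * qadj V)))"
    using dims by (simp add: commute assoc_mult_mat_dims index_mult_mat(2,3))
  also have "R * (qadj R * qadj V) = qadj V"
    using qunitary_cancel_left(2)[OF R qadj_carrier[OF carriers(2)]] by simp
  finally show ?thesis
    using B P R dims by (simp add: qsvd_def qunitary_mult assoc_mult_mat_dims index_mult_mat(2,3))
qed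

lemma realigning_unitaries:
  assumes nm: "n \<le> m" and "r < n" and W: "qunitary m W" and Z: "qunitary n Z"
    and Z_lower: "\<And>j. j < r \<Longrightarrow> Z $$ (r, j) = 0"
    and row_eq: "\<And>j. j < n \<Longrightarrow> W $$ (r, j) = Z $$ (r, j)"
    and row_block: "\<And>j. j < n \<Longrightarrow> Z $$ (r, j) \<noteq> 0 \<Longrightarrow> b j = b r"
    and row_tail: "\<And>j. n \<le> j \<Longrightarrow> j < m \<Longrightarrow> W $$ (r, j) = 0"
  obtains P R where "qunitary m P" "qunitary n R" "P * diag_rect m n b = diag_rect m n b * R"
    "col P r = col (qadj W) r" "col R r = col (qadj Z) r"
    "\<And>j. j < r \<Longrightarrow> col P j = unit_vec m j" "\<And>j. j < r \<Longrightarrow> col R j = unit_vec n j"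
proof
  define v where "v k = (if k < n then qcnj (Z $$ (r, k)) else 0)" for k
  have norm_n: "(\<Sum>k<n. qnorm2 (v k)) = 1"
    using qunitary_row_norm[OF Z \<open>r < n\<close>] by (simp add: v_def)
  moreover have "(\<Sum>k<m. qnorm2 (v k)) = (\<Sum>k<n. qnorm2 (v k))"
    using nm by (intro sum.mono_neutral_right) (auto simp: v_def)
  ultimately have norm_m: "(\<Sum>k<m. qnorm2 (v k)) = 1"
    by simp
  have "r < m"
    using nm \<open>r < n\<close> by simp
  have v_W: "v t = qcnj (W $$ (r, t))" if "t < m" for t
    using that row_eq row_tail by (cases "t < n") (simp_all add: v_def)
  have W_dims: "dim_row W = m" "dim_col W = m" and Z_dims: "dim_row Z = n" "dim_col Z = n"
    using qunitary_carrier[OF W] qunitary_carrier[OF Z] by simp_all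
  show "qunitary m (col_completion m v r)" "qunitary n (col_completion n v r)"
    by (simp_all add: qunitary_col_completion)
  show "col_completion m v r * diag_rect m n b = diag_rect m n b * col_completion n v r"
    using \<open>r < n\<close> nm row_block by (intro col_completion_diag_rect) (auto simp: v_def)
  show "col (col_completion m v r) r = col (qadj W) r"
    using \<open>r < m\<close> W_dims by (intro eq_vecI) (simp_all add: col_completion_col_r[OF _ norm_m] v_W)
  show "col (col_completion n v r) r = col (qadj Z) r"
    using \<open>r < n\<close> Z_dims by (intro eq_vecI) (simp_all add: col_completion_col_r[OF _ norm_n] v_def)
  show "col (col_completion m v r) j = unit_vec m j" if "j < r" for j
    using that \<open>r < m\<close> Z_lower \<open>r < n\<close>
    by (intro eq_vecI) (simp_all add: col_completion_col_fixed v_def unit_vec_def)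
  show "col (col_completion n v r) j = unit_vec n j" if "j < r" for j
    using that \<open>r < n\<close> Z_lower
    by (intro eq_vecI) (simp_all add: col_completion_col_fixed v_def unit_vec_def)
qed

definition svds_agree ::
    "nat \<Rightarrow> nat \<Rightarrow> nat \<Rightarrow> quat mat \<Rightarrow> quat mat \<Rightarrow> (nat \<Rightarrow> real) \<Rightarrow> (nat \<Rightarrow> real) \<Rightarrow> bool" where
  "svds_agree m n r A B a b \<longleftrightarrow> (\<exists>U1 V1 U2 V2. qsvd m n A U1 V1 a \<and> qsvd m n B U2 V2 b \<and>
     cols_agree m r U1 U2 \<and> cols_agree n r V1 V2)"

lemma svds_agree_swap: "svds_agree m n r A B a b \<Longrightarrow> svds_agree m n r B A b a"
  unfolding svds_agree_def by (meson cols_agree_sym)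

lemma svds_agree_Suc_block:
  assumes nm: "n \<le> m" and "r < n" and a: "desc_nonneg n a" and b: "desc_nonneg n b"
    and eq: "qre (qtrace (qadj A * B)) = (\<Sum>i<n. a i * b i)"
    and agree: "svds_agree m n r A B a b"
    and "r \<le> k" "k < n" and a_drop: "0 < a k" "Suc k < n \<Longrightarrow> a (Suc k) < a k"
    and "0 < b r" and b_const: "\<And>i. i \<in> {r..k} \<Longrightarrow> b i = b r"
  shows "svds_agree m n (Suc r) A B a b"
proof -
  obtain U1 V1 U2 V2 where A: "qsvd m n A U1 V1 a" and B: "qsvd m n B U2 V2 b"
    and agree_U: "cols_agree m r U1 U2" and agree_V: "cols_agree n r V1 V2"
    using agree by (auto simp: svds_agree_def)
  have U1: "qunitary m U1" and U2: "qunitary m U2" and V1: "qunitary n V1" and V2: "qunitary n V2"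
    using A B by (simp_all add: qsvd_def)
  define W where "W = qadj U1 * U2"
  define Z where "Z = qadj V1 * V2"
  have W: "qunitary m W" and Z: "qunitary n Z"
    unfolding W_def Z_def using U1 U2 V1 V2 by (simp_all add: qunitary_mult qunitary_qadj)
  have W_id: "leading_identity m r W" and Z_id: "leading_identity n r Z"
    unfolding W_def Z_def using U1 U2 V1 V2 agree_U agree_V by (simp_all add: cols_agree_leading_identity)
  have lower_zero: "W $$ (r, j) = 0 \<and> Z $$ (r, j) = 0" if "j < r" for j
    using W_id Z_id that \<open>r < n\<close> nm by (auto simp: leading_identity_def)
  have "coupling n W Z b r = b r"
    using eq re_trace_qsvd[OF nm A B]
    by (intro coupling_eq_block_start[OF W Z nm a b W_id Z_id _ assms(7,8) a_drop b_const])
      (simp add: W_def Z_def)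
  then have row: "\<And>j. j < n \<Longrightarrow> W $$ (r, j) = Z $$ (r, j)"
    "\<And>j. j < n \<Longrightarrow> Z $$ (r, j) \<noteq> 0 \<Longrightarrow> b j = b r"
    "\<And>j. n \<le> j \<Longrightarrow> j < m \<Longrightarrow> W $$ (r, j) = 0"
    using coupling_eq_row[OF W Z nm b \<open>r < n\<close> \<open>0 < b r\<close>] lower_zero by blast+
  obtain P R where P: "qunitary m P" and R: "qunitary n R"
    and commute: "P * diag_rect m n b = diag_rect m n b * R"
    and P_r: "col P r = col (qadj W) r" and R_r: "col R r = col (qadj Z) r"
    and P_lower: "\<And>j. j < r \<Longrightarrow> col P j = unit_vec m j"
    and R_lower: "\<And>j. j < r \<Longrightarrow> col R j = unit_vec n j"
    using realigning_unitaries[OF nm \<open>r < n\<close> W Z, of b] lower_zero row by blast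
  have "qadj W = qadj U2 * U1" "qadj Z = qadj V2 * V1"
    using carrier_matD[OF qunitary_carrier[OF U1]] carrier_matD[OF qunitary_carrier[OF U2]]
      carrier_matD[OF qunitary_carrier[OF V1]] carrier_matD[OF qunitary_carrier[OF V2]]
    by (simp_all add: W_def Z_def qadj_mult)
  then have "cols_agree m (Suc r) U1 (U2 * P)" "cols_agree n (Suc r) V1 (V2 * R)"
    using U1 U2 V1 V2 agree_U agree_V \<open>r < n\<close> nm P R P_r R_r P_lower R_lower
    by (auto intro!: cols_agree_mult_Suc simp: qunitary_carrier)
  then show ?thesis
    using A qsvd_mult_unitaries[OF B P R commute] by (auto simp: svds_agree_def)
qed

lemma svd_eq_if_cols_agree:
  assumes nm: "n \<le> m" and U1: "U1 \<in> carrier_mat m m" and U2: "U2 \<in> carrier_mat m m"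
    and V1: "V1 \<in> carrier_mat n n" and V2: "V2 \<in> carrier_mat n n"
    and agree_U: "cols_agree m r U1 U2" and agree_V: "cols_agree n r V1 V2"
    and a_tail: "\<And>i. r \<le> i \<Longrightarrow> i < n \<Longrightarrow> a i = 0"
  shows "U1 * diag_rect m n a * qadj V1 = U2 * diag_rect m n a * qadj V2"
proof (rule eq_matI)
  fix i j assume "i < dim_row (U2 * diag_rect m n a * qadj V2)" "j < dim_col (U2 * diag_rect m n a * qadj V2)"
  then have "i < m" "j < n"
    using U2 V2 by (simp_all add: index_mult_mat(2,3))
  have "U1 $$ (i, k) * qreal (a k) * qcnj (V1 $$ (j, k)) = U2 $$ (i, k) * qreal (a k) * qcnj (V2 $$ (j, k))"
    if "k < n" for k
  proof (cases "k < r")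
    case True
    then show ?thesis
      using agree_U agree_V \<open>i < m\<close> \<open>j < n\<close> by (simp add: cols_agree_def)
  qed (simp add: a_tail that)
  then show "(U1 * diag_rect m n a * qadj V1) $$ (i, j) = (U2 * diag_rect m n a * qadj V2) $$ (i, j)"
    using \<open>i < m\<close> \<open>j < n\<close> by (simp add: svd_index[OF U1 V1 nm] svd_index[OF U2 V2 nm])
qed (use U1 U2 V1 V2 in \<open>simp_all add: index_mult_mat(2,3)\<close>)

lemma common_block_end:
  fixes a b :: "nat \<Rightarrow> real"
  assumes "r < n"
  obtains k where "r \<le> k" "k < n" "\<And>i. i \<in> {r..k} \<Longrightarrow> a i = a r \<and> b i = b r"
    "Suc k < n \<Longrightarrow> a (Suc k) \<noteq> a r \<or> b (Suc k) \<noteq> b r"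
proof -
  define P where "P k \<longleftrightarrow> r \<le> k \<and> k < n \<and> (\<forall>i\<in>{r..k}. a i = a r \<and> b i = b r)" for k
  have "P r"
    using assms by (simp add: P_def)
  moreover have "\<forall>k. P k \<longrightarrow> id k < n"
    by (simp add: P_def)
  ultimately obtain k where "P k" and maximal: "\<And>k'. P k' \<Longrightarrow> k' \<le> k"
    using ex_has_greatest_nat[of P r id n] by auto
  have "a (Suc k) \<noteq> a r \<or> b (Suc k) \<noteq> b r" if "Suc k < n"
  proof (rule ccontr)
    assume "\<not> (a (Suc k) \<noteq> a r \<or> b (Suc k) \<noteq> b r)"
    moreover have "i \<in> {r..k} \<or> i = Suc k" if "i \<in> {r..Suc k}" for i
      using that by auto
    ultimately have "P (Suc k)"
      using \<open>P k\<close> \<open>Suc k < n\<close> unfolding P_def by (metis atLeastAtMost_iff le_SucI)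
    then show False
      using maximal[of "Suc k"] by simp
  qed
  then show ?thesis
    using that \<open>P k\<close> unfolding P_def by blast
qed

lemma svds_agree_Suc_zero:
  assumes nm: "n \<le> m" and a: "desc_nonneg n a" and "a r = 0" and agree: "svds_agree m n r A B a b"
  shows "svds_agree m n (Suc r) A B a b"
proof -
  obtain U1 V1 U2 V2 where A: "qsvd m n A U1 V1 a" and B: "qsvd m n B U2 V2 b"
    and agree_U: "cols_agree m r U1 U2" and agree_V: "cols_agree n r V1 V2"
    using agree by (auto simp: svds_agree_def)
  have "a i = 0" if "r \<le> i" "i < n" for i
  proof -
    have "a i \<le> a r" "0 \<le> a i"
      using a that by (simp_all add: desc_nonneg_def)
    then show ?thesis
      using \<open>a r = 0\<close> by simp
  qed
  then have "qsvd m n A U2 V2 a"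
    using A B svd_eq_if_cols_agree[OF nm _ _ _ _ agree_U agree_V, of a]
    by (simp add: qsvd_def qunitary_carrier)
  then show ?thesis
    using B by (auto simp: svds_agree_def cols_agree_def)
qed

lemma svds_agree_Suc_pos:
  assumes nm: "n \<le> m" and "r < n" and a: "desc_nonneg n a" and b: "desc_nonneg n b"
    and eq: "qre (qtrace (qadj A * B)) = (\<Sum>i<n. a i * b i)"
    and agree: "svds_agree m n r A B a b" and "0 < a r" "0 < b r"
  shows "svds_agree m n (Suc r) A B a b"
proof -
  obtain k where "r \<le> k" "k < n" and const: "\<And>i. i \<in> {r..k} \<Longrightarrow> a i = a r \<and> b i = b r"
    and drop: "Suc k < n \<Longrightarrow> a (Suc k) \<noteq> a r \<or> b (Suc k) \<noteq> b r"
    using common_block_end[OF \<open>r < n\<close>] by blast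
  have a_const: "\<And>i. i \<in> {r..k} \<Longrightarrow> a i = a r" and b_const: "\<And>i. i \<in> {r..k} \<Longrightarrow> b i = b r"
    using const by blast+
  have "a k = a r" "b k = b r"
    using a_const[of k] b_const[of k] \<open>r \<le> k\<close> by simp_all
  have desc_at_k: "a (Suc k) \<le> a k" "b (Suc k) \<le> b k" if "Suc k < n"
    using a b that by (simp_all add: desc_nonneg_def)
  show ?thesis
  proof (cases "Suc k < n \<longrightarrow> a (Suc k) \<noteq> a r")
    case True
    then have "Suc k < n \<Longrightarrow> a (Suc k) < a k"
      using desc_at_k \<open>a k = a r\<close> by fastforce
    then show ?thesis
      using svds_agree_Suc_block[OF nm \<open>r < n\<close> a b eq agree \<open>r \<le> k\<close> \<open>k < n\<close> _ _ \<open>0 < b r\<close> b_const]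
        \<open>0 < a r\<close> \<open>a k = a r\<close> by simp
  next
    case False
    then have "Suc k < n \<Longrightarrow> b (Suc k) < b k"
      using drop desc_at_k \<open>b k = b r\<close> by fastforce
    moreover have "A \<in> carrier_mat m n" "B \<in> carrier_mat m n"
      using agree by (auto simp: svds_agree_def dest: qsvd_carrier)
    then have "qre (qtrace (qadj B * A)) = (\<Sum>i<n. b i * a i)"
      using eq qre_qtrace_qadj_mult_commute by (simp add: mult.commute)
    ultimately have "svds_agree m n (Suc r) B A b a"
      using svds_agree_Suc_block[OF nm \<open>r < n\<close> b a _ svds_agree_swap[OF agree] \<open>r \<le> k\<close> \<open>k < n\<close>
          _ _ \<open>0 < a r\<close> a_const] \<open>0 < b r\<close> \<open>b k = b r\<close> by simp
    then show ?thesis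
      by (rule svds_agree_swap)
  qed
qed

lemma svds_agree_Suc:
  assumes nm: "n \<le> m" and "r < n" and a: "desc_nonneg n a" and b: "desc_nonneg n b"
    and eq: "qre (qtrace (qadj A * B)) = (\<Sum>i<n. a i * b i)"
    and agree: "svds_agree m n r A B a b"
  shows "svds_agree m n (Suc r) A B a b"
proof -
  consider "a r = 0" | "b r = 0" | "0 < a r" "0 < b r"
    using a b \<open>r < n\<close> by (force simp: desc_nonneg_def)
  then show ?thesis
  proof cases
    case 2
    then show ?thesis
      using svds_agree_Suc_zero[OF nm b _ svds_agree_swap[OF agree]] by (simp add: svds_agree_swap)
  qed (simp_all add: svds_agree_Suc_zero[OF nm a _ agree] svds_agree_Suc_pos[OF assms])
qed

lemma svds_agree_upto:
  assumes "n \<le> m" "desc_nonneg n a" "desc_nonneg n b"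
    and "qre (qtrace (qadj A * B)) = (\<Sum>i<n. a i * b i)"
    and "svds_agree m n 0 A B a b" "r \<le> n"
  shows "svds_agree m n r A B a b"
  using \<open>r \<le> n\<close>
proof (induction r)
  case (Suc r)
  then show ?case
    using svds_agree_Suc[OF assms(1) _ assms(2-4)] by simp
qed (use assms(5) in simp)

lemma svds_agree_simultaneous:
  assumes "n \<le> m" "svds_agree m n n A B a b"
  shows "\<exists>U V. qsvd m n A U V a \<and> qsvd m n B U V b"
proof -
  obtain U1 V1 U2 V2 where A: "qsvd m n A U1 V1 a" and B: "qsvd m n B U2 V2 b"
    and "cols_agree m n U1 U2" "cols_agree n n V1 V2"
    using assms(2) by (auto simp: svds_agree_def)
  then have "U1 * diag_rect m n a * qadj V1 = U2 * diag_rect m n a * qadj V2"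
    using A B by (intro svd_eq_if_cols_agree[OF assms(1)]) (auto simp: qsvd_def qunitary_carrier)
  then have "qsvd m n A U2 V2 a"
    using A B by (simp add: qsvd_def)
  then show ?thesis
    using B by blast
qed

lemma coupling_one: "n \<le> m \<Longrightarrow> i < n \<Longrightarrow> coupling n (1\<^sub>m m) (1\<^sub>m n) b i = b i"
  by (rule coupling_leading_identity[of _ n]) (simp_all add: leading_identity_def)

lemma re_trace_qsvd_le:
  assumes nm: "n \<le> m" and A: "qsvd m n A U1 V1 a" and B: "qsvd m n B U2 V2 b"
    and "desc_nonneg n a" "desc_nonneg n b"
  shows "qre (qtrace (qadj A * B)) \<le> (\<Sum>i<n. a i * b i)"
  using A B assms(4,5) unfolding re_trace_qsvd[OF nm A B]
  by (intro coupling_sum_le[OF _ _ nm]) (simp_all add: qsvd_def qunitary_mult qunitary_qadj)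

lemma re_trace_qsvd_eq_iff:
  assumes nm: "n \<le> m" and A: "qsvd m n A U1 V1 a" and B: "qsvd m n B U2 V2 b"
    and a: "desc_nonneg n a" and b: "desc_nonneg n b"
  shows "qre (qtrace (qadj A * B)) = (\<Sum>i<n. a i * b i) \<longleftrightarrow>
    (\<exists>U V. qsvd m n A U V a \<and> qsvd m n B U V b)"
proof
  assume "qre (qtrace (qadj A * B)) = (\<Sum>i<n. a i * b i)"
  moreover have "svds_agree m n 0 A B a b"
    using A B by (auto simp: svds_agree_def cols_agree_def)
  ultimately show "\<exists>U V. qsvd m n A U V a \<and> qsvd m n B U V b"
    using svds_agree_upto[OF nm a b] svds_agree_simultaneous[OF nm] by blast
next
  assume "\<exists>U V. qsvd m n A U V a \<and> qsvd m n B U V b"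
  then obtain U V where A': "qsvd m n A U V a" and B': "qsvd m n B U V b"
    by blast
  then have "qadj U * U = 1\<^sub>m m" "qadj V * V = 1\<^sub>m n"
    by (simp_all add: qsvd_def qunitary_def)
  then show "qre (qtrace (qadj A * B)) = (\<Sum>i<n. a i * b i)"
    using nm by (simp add: re_trace_qsvd[OF nm A' B'] coupling_one)
qed

theorem lemma3p4:
  fixes A B :: "quat mat" and m n :: nat and sA sB :: "nat \<Rightarrow> real"
  assumes "m \<ge> n"
    and "A \<in> carrier_mat m n" and "B \<in> carrier_mat m n"
    and "singular_values m n A sA" and "singular_values m n B sB"
  shows "qre (qtrace (qadj A * B)) \<le> (\<Sum>i<n. sA i * sB i) \<and>
         (qre (qtrace (qadj A * B)) = (\<Sum>i<n. sA i * sB i) \<longleftrightarrow>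
           (\<exists>U V. qunitary m U \<and> qunitary n V \<and>
                  A = U * diag_rect m n sA * qadj V \<and> B = U * diag_rect m n sB * qadj V))"
proof -
  obtain U1 V1 U2 V2 where A: "qsvd m n A U1 V1 sA" and B: "qsvd m n B U2 V2 sB"
    using assms(4,5) by (auto simp: singular_values_def qsvd_def)
  have a: "desc_nonneg n sA" and b: "desc_nonneg n sB"
    using assms(4,5) by (simp_all add: singular_values_def desc_nonneg_def)
  show ?thesis
    using re_trace_qsvd_le[OF assms(1) A B a b] re_trace_qsvd_eq_iff[OF assms(1) A B a b]
    by (auto simp: qsvd_def)
qed

end
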